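(* Let $G\subset\mathrm{Diff}(\mathbb C^n,0)$ be an irreducible group having a basic set of generators one of which is tangent to the identity (i.e. has derivative $\mathrm{Id}$ at $0$). Then $G=\{\mathrm{Id}\}$.
   Context: $\mathrm{Diff}(\mathbb C^n,0)$ denotes the group of germs at $0$ of holomorphic diffeomorphisms of $\mathbb C^n$ fixing $0$. A subgroup $G\subset \mathrm{Diff}(\mathbb C^n,0)$ is irreducible if it admits a finite set of generators $f_1,\ldots,f_{\nu+1}$ (a basic set of generators; repetitions allowed) such that (a) $f_1\circ\cdots\circ f_{\nu+1}=\mathrm{Id}$ and (b) for all $i,j$ there is $h\in G$ with $f_i\circ h=h\circ f_j$. *)

theory Defs
  imports "HOL-Analysis.Analysis"
begin

text \<open>Maps of C^n are functions on complex^'n; germs at 0 are handled via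
  representatives together with equality on a neighbourhood of 0.\<close>

definition germ_eq :: "('a::topological_space \<Rightarrow> 'b) \<Rightarrow> ('a \<Rightarrow> 'b) \<Rightarrow> 'a \<Rightarrow> bool" where
  "germ_eq f g a \<longleftrightarrow> eventually (\<lambda>x. f x = g x) (nhds a)"

abbreviation germ_eq0 :: "(complex^'n \<Rightarrow> complex^'n) \<Rightarrow> (complex^'n \<Rightarrow> complex^'n) \<Rightarrow> bool" where
  "germ_eq0 f g \<equiv> germ_eq f g 0"

definition holo_on :: "(complex^'n \<Rightarrow> complex^'m) \<Rightarrow> (complex^'n) set \<Rightarrow> bool" where
  "holo_on f U \<longleftrightarrow> (\<forall>x\<in>U. \<exists>L. (f has_derivative L) (at x) \<and>
       (\<forall>(c::complex) v. L (c *s v) = c *s L v))"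

definition holo_near0 :: "(complex^'n \<Rightarrow> complex^'m) \<Rightarrow> bool" where
  "holo_near0 f \<longleftrightarrow> (\<exists>U. open U \<and> 0 \<in> U \<and> holo_on f U)"

definition diff0 :: "(complex^'n \<Rightarrow> complex^'n) \<Rightarrow> bool" where
  "diff0 f \<longleftrightarrow> f 0 = 0 \<and> holo_near0 f \<and>
     (\<exists>g. g 0 = 0 \<and> holo_near0 g \<and> germ_eq0 (g \<circ> f) id \<and> germ_eq0 (f \<circ> g) id)"

inductive_set words :: "(complex^'n \<Rightarrow> complex^'n) set \<Rightarrow> (complex^'n \<Rightarrow> complex^'n) set"
  for S where
    words_id: "id \<in> words S"
  | words_gen: "s \<in> S \<Longrightarrow> w \<in> words S \<Longrightarrow> s \<circ> w \<in> words S"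
  | words_inv: "s \<in> S \<Longrightarrow> diff0 g \<Longrightarrow> germ_eq0 (g \<circ> s) id \<Longrightarrow> w \<in> words S
                 \<Longrightarrow> g \<circ> w \<in> words S"

definition generated_by :: "(complex^'n \<Rightarrow> complex^'n) set \<Rightarrow> (complex^'n \<Rightarrow> complex^'n) list \<Rightarrow> bool" where
  "generated_by G fs \<longleftrightarrow> (\<forall>g\<in>G. diff0 g) \<and> set fs \<subseteq> G \<and>
     (\<forall>g\<in>G. \<exists>w\<in>words (set fs). germ_eq0 g w) \<and>
     (\<forall>w\<in>words (set fs). \<exists>g\<in>G. germ_eq0 g w)"

definition basic_generators :: "(complex^'n \<Rightarrow> complex^'n) set \<Rightarrow> (complex^'n \<Rightarrow> complex^'n) list \<Rightarrow> bool" where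
  "basic_generators G fs \<longleftrightarrow> fs \<noteq> [] \<and> generated_by G fs \<and>
     germ_eq0 (foldr (\<circ>) fs id) id \<and>
     (\<forall>i<length fs. \<forall>j<length fs. \<exists>h\<in>G. germ_eq0 (fs ! i \<circ> h) (h \<circ> fs ! j))"

definition irreducible_group :: "(complex^'n \<Rightarrow> complex^'n) set \<Rightarrow> bool" where
  "irreducible_group G \<longleftrightarrow> (\<exists>fs. basic_generators G fs)"

end

theory Submission
  imports Defs "HOL-Complex_Analysis.Cauchy_Integral_Formula"
begin

text \<open>By the conjugacy condition every basic generator f has derivative conjugate to that of the
  tangent one, hence all of G is tangent to the identity. Suppose G is nontrivial and write
  f(x) = x + P_f(x) + O(|x|^(k+1)) with P_f homogeneous of degree k \<ge> 2, where k is the first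
  degree at which some generator differs from the identity. Conjugating by a map tangent to the
  identity does not change P_f, so all P_f equal one nonzero P. Composing maps of this form adds
  their degree-k parts, so f_1 \<circ> \<dots> \<circ> f_(\<nu>+1) = Id forces (\<nu>+1) P = 0, a contradiction.

  Homogeneous parts are accessed through one complex variable: P_f(x0) is the k-th Taylor
  coefficient of t \<mapsto> f(t x0) - t x0, and all estimates come from the Cauchy inequalities.\<close>

abbreviation deviation :: "('a \<Rightarrow> 'a::ab_group_add) \<Rightarrow> 'a \<Rightarrow> 'a" where
  "deviation f \<equiv> \<lambda>x. f x - x"

lemma norm_vector_smult: "norm (c *s (x::complex^'n)) = cmod c * norm x"
proof -
  have "norm (c *s x) = L2_set (\<lambda>i. cmod c * norm (x$i)) UNIV"
    unfolding norm_vec_def by (simp add: norm_mult)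
  also have "\<dots> = cmod c * norm x"
    unfolding norm_vec_def by (simp add: L2_set_right_distrib)
  finally show ?thesis .
qed

lemma norm_le_card_mult_component_bound:
  fixes x :: "complex^'n" and B :: real
  assumes "\<And>i. norm (x$i) \<le> B"
  shows "norm x \<le> CARD('n) * B"
proof -
  have "norm x \<le> (\<Sum>i\<in>UNIV. norm (x$i))"
    unfolding norm_vec_def by (rule L2_set_le_sum) auto
  also have "\<dots> \<le> (\<Sum>i\<in>(UNIV::'n set). B)" by (rule sum_mono) (rule assms)
  finally show ?thesis by simp
qed

lemma sum_list_const_scaleR: "(\<Sum>x\<leftarrow>xs. (c::'a::real_vector)) = real (length xs) *\<^sub>R c"
  by (induction xs) (simp_all add: algebra_simps)

lemma polar_vector:
  fixes x :: "complex^'n"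
  obtains t :: complex and u where "norm u \<le> 1" "cmod t = norm x" "x = t *s u"
proof (cases "x = 0")
  case True
  then show ?thesis using that[of 0 0] by simp
next
  case False
  show ?thesis
  proof (rule that)
    show "norm ((1 / complex_of_real (norm x)) *s x) \<le> 1"
      using False by (simp add: norm_vector_smult norm_divide)
    show "x = complex_of_real (norm x) *s ((1 / complex_of_real (norm x)) *s x)"
      using False by (simp add: vector_smult_assoc)
  qed simp
qed

section \<open>Holomorphic maps of several variables\<close>

lemma holo_on_imp_continuous_on: "holo_on F U \<Longrightarrow> continuous_on U F"
  unfolding holo_on_def
  by (meson continuous_at_imp_continuous_on has_derivative_continuous)

lemma holo_near0_ball:
  assumes "holo_near0 F"
  obtains \<rho> where "\<rho> > 0" "holo_on F (ball 0 \<rho>)"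
proof -
  obtain U where U: "open U" "0 \<in> U" "holo_on F U"
    using assms unfolding holo_near0_def by blast
  then obtain e where "e > 0" "ball 0 e \<subseteq> U" using open_contains_ball by blast
  then show ?thesis using that[of e] U(3) unfolding holo_on_def by blast
qed

lemma holo_near0_has_derivative:
  assumes "holo_near0 F"
  obtains L where "(F has_derivative L) (at 0)"
proof -
  obtain \<rho> where "\<rho> > 0" "holo_on F (ball 0 \<rho>)" using holo_near0_ball[OF assms] .
  then show ?thesis using that unfolding holo_on_def by fastforce
qed

lemma holo_near0_deviation:
  assumes "holo_near0 f"
  shows "holo_near0 (deviation f)"
proof -
  have "holo_on (deviation f) U" if hol: "holo_on f U" for U
    unfolding holo_on_def
  proof
    fix x assume "x \<in> U"
    then obtain L where L: "(f has_derivative L) (at x)" "\<And>(c::complex) w. L (c *s w) = c *s L w"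
      using hol unfolding holo_on_def by blast
    have "(deviation f has_derivative (\<lambda>h. L h - h)) (at x)"
      by (intro has_derivative_diff L(1) has_derivative_ident)
    moreover have "L (c *s w) - c *s w = c *s (L w - w)" for c :: complex and w
      by (simp add: L(2) vector_ssub_ldistrib)
    ultimately show "\<exists>L. (deviation f has_derivative L) (at x) \<and>
        (\<forall>(c::complex) w. L (c *s w) = c *s L w)"
      by blast
  qed
  then show ?thesis using assms unfolding holo_near0_def by blast
qed

lemma has_field_derivative_along_line:
  fixes F :: "complex^'n \<Rightarrow> complex^'n"
  assumes "(F has_derivative L) (at (z + t *s v))"
    and lin: "\<And>(c::complex) w. L (c *s w) = c *s L w"
  shows "((\<lambda>t. F (z + t *s v) $ j) has_field_derivative (L v $ j)) (at t)"
proof -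
  have "bounded_linear (\<lambda>t::complex. t *s v)"
    by (rule bounded_linear_intro[where K="norm v"])
       (auto simp: norm_vector_smult vec_eq_iff algebra_simps)
  then have "((\<lambda>t. z + t *s v) has_derivative (\<lambda>h. h *s v)) (at t)"
    by (intro has_derivative_add_const[where c=z, simplified add.commute]
        bounded_linear_imp_has_derivative)
  from has_derivative_compose[OF this assms(1)]
  have "((\<lambda>t. F (z + t *s v) $ j) has_derivative (\<lambda>h. L (h *s v) $ j)) (at t)"
    by (intro bounded_linear.has_derivative[OF bounded_linear_vec_nth]) (simp add: o_def)
  moreover have "(\<lambda>h. L (h *s v) $ j) = (\<lambda>h. (L v $ j) * h)"
    by (auto simp: lin)
  ultimately show ?thesis by (simp add: has_field_derivative_def)
qed

lemma holomorphic_on_along_line: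
  fixes F :: "complex^'n \<Rightarrow> complex^'n"
  assumes "holo_on F U" and "\<And>t. t \<in> S \<Longrightarrow> z + t *s v \<in> U"
  shows "(\<lambda>t. F (z + t *s v) $ j) holomorphic_on S"
  unfolding holomorphic_on_def field_differentiable_def
proof
  fix t assume "t \<in> S"
  then obtain L where "(F has_derivative L) (at (z + t *s v))"
      "\<And>(c::complex) w. L (c *s w) = c *s L w"
    using assms unfolding holo_on_def by blast
  from has_field_derivative_along_line[OF this]
  show "\<exists>f'. ((\<lambda>t. F (z + t *s v) $ j) has_field_derivative f') (at t within S)"
    by (blast intro: has_field_derivative_at_within)
qed

lemma taylor_remainder_bound:
  fixes \<phi> :: "complex \<Rightarrow> complex"
  assumes hol: "\<phi> holomorphic_on ball 0 (2*R)" and R: "R > 0"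
    and bd: "\<And>t. norm t \<le> R \<Longrightarrow> norm (\<phi> t) \<le> M"
    and t: "norm t \<le> R/2"
  shows "norm (\<phi> t - (\<Sum>i<k. (deriv ^^ i) \<phi> 0 / fact i * t^i)) \<le> 2*M*(norm t/R)^k"
proof -
  define a where "a i = (deriv ^^ i) \<phi> 0 / fact i" for i
  have "t \<in> ball 0 (2*R)" using t R by simp
  from holomorphic_power_series[OF hol this]
  have "(\<lambda>n. a n * t^n) sums \<phi> t" by (simp add: a_def)
  from sums_split_initial_segment[OF this, of k]
  have tail: "(\<lambda>n. a (n+k) * t^(n+k)) sums (\<phi> t - (\<Sum>i<k. a i * t^i))" by simp
  have M0: "M \<ge> 0" using bd[of 0] R norm_ge_zero[of "\<phi> 0"] by (simp del: norm_ge_zero)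
  have coeff: "norm (a n) \<le> M / R^n" for n
  proof -
    have "norm ((deriv ^^ n) \<phi> 0) \<le> fact n * M / R^n"
    proof (rule Cauchy_inequality)
      show "\<phi> holomorphic_on ball 0 R" using R by (intro holomorphic_on_subset[OF hol]) auto
      show "continuous_on (cball 0 R) \<phi>"
        using R by (intro continuous_on_subset[OF holomorphic_on_imp_continuous_on[OF hol]]) auto
      show "norm (0 - x) = R \<Longrightarrow> norm (\<phi> x) \<le> M" for x using bd[of x] by simp
    qed (fact R)
    then show ?thesis by (simp add: a_def norm_divide field_simps)
  qed
  define q where "q = norm t / R"
  have q: "q \<ge> 0" "q \<le> 1/2" using t R by (auto simp: q_def field_simps)
  have term_bound: "norm (a (n+k) * t^(n+k)) \<le> M * q^k * q^n" for n
  proof -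
    have "norm (a (n+k) * t^(n+k)) \<le> M / R^(n+k) * norm t^(n+k)"
      unfolding norm_mult norm_power by (rule mult_right_mono[OF coeff]) simp
    also have "\<dots> = M * q^k * q^n"
      using R by (simp add: q_def power_add power_divide field_simps)
    finally show ?thesis .
  qed
  have "(\<lambda>n. M * q^k * q^n) sums (M * q^k * (1 / (1 - q)))"
    using geometric_sums[of q] q by (intro sums_mult) auto
  then have "norm (\<phi> t - (\<Sum>i<k. a i * t^i)) \<le> M * q^k * (1 / (1 - q))"
    using norm_suminf_le[of "\<lambda>n. a (n+k) * t^(n+k)", OF term_bound] tail by (auto simp: sums_iff)
  also have "\<dots> \<le> M * q^k * 2"
    using q M0 by (intro mult_left_mono) (auto simp: field_simps)
  finally show ?thesis by (simp add: a_def q_def)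
qed

section \<open>Taylor coefficients along complex lines\<close>

definition ray_coeff :: "(complex^'n \<Rightarrow> complex^'n) \<Rightarrow> complex^'n \<Rightarrow> 'n \<Rightarrow> nat \<Rightarrow> complex" where
  "ray_coeff F x0 j m = (deriv ^^ m) (\<lambda>t. F (t *s x0) $ j) 0"

definition ray_flat :: "(complex^'n \<Rightarrow> complex^'n) \<Rightarrow> nat \<Rightarrow> bool" where
  "ray_flat F k \<longleftrightarrow> (\<forall>x0 j m. norm x0 \<le> 1 \<longrightarrow> m < k \<longrightarrow> ray_coeff F x0 j m = 0)"

text \<open>The degree-k homogeneous part of F, evaluated at x0.\<close>
definition ray_leading_term :: "(complex^'n \<Rightarrow> complex^'n) \<Rightarrow> nat \<Rightarrow> complex^'n \<Rightarrow> complex^'n" where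
  "ray_leading_term F k x0 = (\<chi> j. ray_coeff F x0 j k / fact k)"

lemma ray_flat_mono: "ray_flat F k \<Longrightarrow> m \<le> k \<Longrightarrow> ray_flat F m"
  unfolding ray_flat_def by auto

lemma tangent_to_id_imp_ray_flat_deviation_2:
  fixes f :: "complex^'n \<Rightarrow> complex^'n"
  assumes f0: "f 0 = 0" and df: "(f has_derivative id) (at 0)"
  shows "ray_flat (deviation f) 2"
  unfolding ray_flat_def
proof (intro allI impI)
  fix x0 :: "complex^'n" and j m assume "m < (2::nat)"
  then consider "m = 0" | "m = 1" by linarith
  then show "ray_coeff (deviation f) x0 j m = 0"
  proof cases
    case 1
    then show ?thesis by (simp add: ray_coeff_def f0)
  next
    case 2
    have "(deviation f has_derivative (\<lambda>h. id h - h)) (at (0 + 0 *s x0))"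
      using has_derivative_diff[OF df has_derivative_ident] by simp
    from has_field_derivative_along_line[OF this]
    have "((\<lambda>t. deviation f (t *s x0) $ j) has_field_derivative 0) (at 0)"
      by simp
    then show ?thesis by (simp add: ray_coeff_def 2 DERIV_imp_deriv)
  qed
qed

lemma ray_taylor_remainder:
  fixes F :: "complex^'n \<Rightarrow> complex^'n"
  assumes "holo_near0 F"
  obtains R M :: real where "R > 0" "M \<ge> 0"
    "\<And>x0 j t k. norm x0 \<le> 1 \<Longrightarrow> norm t \<le> R/2 \<Longrightarrow>
       norm (F (t *s x0) $ j - (\<Sum>i<k. ray_coeff F x0 j i / fact i * t^i)) \<le> 2*M*(norm t/R)^k"
proof -
  obtain \<rho> where \<rho>: "\<rho> > 0" and hol: "holo_on F (ball 0 \<rho>)"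
    using holo_near0_ball[OF assms] by blast
  define R where "R = \<rho>/3"
  have R: "R > 0" using \<rho> by (simp add: R_def)
  have "compact (F ` cball 0 R)"
    using R \<rho> by (intro compact_continuous_image continuous_on_subset[OF holo_on_imp_continuous_on[OF hol]])
                   (auto simp: R_def)
  then obtain M where M: "M > 0" "\<And>y. y \<in> cball 0 R \<Longrightarrow> norm (F y) \<le> M"
    using compact_imp_bounded bounded_pos by (metis image_eqI)
  have short: "norm (t *s x0) \<le> norm t" if "norm x0 \<le> 1" for t :: complex and x0 :: "complex^'n"
    using that mult_left_le[of "norm x0" "cmod t"] by (simp add: norm_vector_smult)
  have "norm (F (t *s x0) $ j - (\<Sum>i<k. ray_coeff F x0 j i / fact i * t^i)) \<le> 2*M*(norm t/R)^k"
    if x0: "norm x0 \<le> 1" and t: "norm t \<le> R/2" for x0 j t k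
    unfolding ray_coeff_def
  proof (rule taylor_remainder_bound[OF _ R _ t])
    have "(\<lambda>t. F (0 + t *s x0) $ j) holomorphic_on ball 0 (2*R)"
    proof (rule holomorphic_on_along_line[OF hol])
      fix s :: complex assume "s \<in> ball 0 (2*R)"
      then have "cmod s < \<rho>" using \<rho> by (simp add: R_def)
      then show "0 + s *s x0 \<in> ball 0 \<rho>" using short[OF x0, of s] by simp
    qed
    then show "(\<lambda>t. F (t *s x0) $ j) holomorphic_on ball 0 (2*R)" by simp
    show "norm (F (s *s x0) $ j) \<le> M" if "norm s \<le> R" for s
      using M(2)[of "s *s x0"] short[OF x0, of s] that
      by (intro order_trans[OF Finite_Cartesian_Product.norm_nth_le]) simp
  qed
  with R M(1) show ?thesis using that[of R M] by simp
qed

lemma ray_flat_uniform_bound: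
  fixes F :: "complex^'n \<Rightarrow> complex^'n"
  assumes "holo_near0 F"
  obtains R C :: real where "R > 0" "C \<ge> 0"
    "\<And>k x. ray_flat F k \<Longrightarrow> norm x \<le> R/2 \<Longrightarrow> norm (F x) \<le> C * (norm x/R)^k"
proof -
  obtain R M :: real where RM: "R > 0" "M \<ge> 0"
    "\<And>x0 j t k. norm x0 \<le> 1 \<Longrightarrow> norm t \<le> R/2 \<Longrightarrow>
       norm (F (t *s x0) $ j - (\<Sum>i<k. ray_coeff F x0 j i / fact i * t^i)) \<le> 2*M*(norm t/R)^k"
    using ray_taylor_remainder[OF assms] by blast
  have bound: "norm (F x) \<le> (CARD('n) * (2*M)) * (norm x/R)^k"
    if flat: "ray_flat F k" and x: "norm x \<le> R/2" for k x
  proof -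
    obtain t u where u: "norm u \<le> 1" and t: "cmod t = norm x" and x_eq: "x = t *s u"
      using polar_vector by blast
    have "norm (F x $ j) \<le> 2*M*(norm x/R)^k" for j
      using RM(3)[OF u, of t j k] flat u x t unfolding ray_flat_def x_eq by simp
    then show ?thesis
      using norm_le_card_mult_component_bound[of "F x" "2*M*(norm x/R)^k"] by (simp add: mult.assoc)
  qed
  show ?thesis using that[OF RM(1) _ bound] RM(2) by simp
qed

lemma ray_flat_all_orders_imp_zero:
  fixes F :: "complex^'n \<Rightarrow> complex^'n"
  assumes "holo_near0 F" "\<And>k. ray_flat F k"
  shows "eventually (\<lambda>x. F x = 0) (nhds 0)"
proof -
  obtain R C :: real where RC: "R > 0" "C \<ge> 0"
    "\<And>k x. ray_flat F k \<Longrightarrow> norm x \<le> R/2 \<Longrightarrow> norm (F x) \<le> C * (norm x/R)^k"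
    using ray_flat_uniform_bound[OF assms(1)] by blast
  have "F x = 0" if x: "norm x < R/2" for x
  proof -
    have "norm x / R < 1" using x RC(1) by (auto simp: field_simps)
    then have "(\<lambda>k. C * (norm x/R)^k) \<longlonglongrightarrow> C * 0"
      using RC(1) by (intro tendsto_mult tendsto_const LIMSEQ_power_zero) simp
    then have "norm (F x) \<le> C * 0"
      by (rule LIMSEQ_le_const) (use RC(3)[OF assms(2)] x in auto)
    then show ?thesis by simp
  qed
  then show ?thesis
    unfolding eventually_nhds_metric using RC(1) by (intro exI[of _ "R/2"]) (auto simp: dist_norm)
qed

section \<open>Order of vanishing at the origin\<close>

definition vanishes_to_order :: "('a::real_normed_vector \<Rightarrow> 'b::real_normed_vector) \<Rightarrow> nat \<Rightarrow> bool" where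
  "vanishes_to_order F k \<longleftrightarrow> (\<exists>C r. r > 0 \<and> (\<forall>x. norm x < r \<longrightarrow> norm (F x) \<le> C * norm x ^ k))"

lemma vanishes_to_orderE:
  assumes "vanishes_to_order F k"
  obtains C r where "C \<ge> 0" "r > 0" "\<And>x. norm x < r \<Longrightarrow> norm (F x) \<le> C * norm x ^ k"
proof -
  obtain C r where "r > 0" and bound: "\<And>x. norm x < r \<Longrightarrow> norm (F x) \<le> C * norm x ^ k"
    using assms unfolding vanishes_to_order_def by blast
  have "norm (F x) \<le> max C 0 * norm x ^ k" if "norm x < r" for x
    using bound[OF that] mult_right_mono[of C "max C 0" "norm x ^ k"] by simp
  with \<open>r > 0\<close> show ?thesis using that[of "max C 0" r] by simp
qed

lemma vanishes_to_order_zero: "vanishes_to_order (\<lambda>x. 0) k"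
  unfolding vanishes_to_order_def by (intro exI[of _ 0] exI[of _ 1]) auto

lemma vanishes_to_order_add:
  assumes "vanishes_to_order F k" "vanishes_to_order G k"
  shows "vanishes_to_order (\<lambda>x. F x + G x) k"
proof -
  obtain C1 r1 where 1: "r1 > 0" "\<And>x. norm x < r1 \<Longrightarrow> norm (F x) \<le> C1 * norm x ^ k"
    using vanishes_to_orderE[OF assms(1)] by blast
  obtain C2 r2 where 2: "r2 > 0" "\<And>x. norm x < r2 \<Longrightarrow> norm (G x) \<le> C2 * norm x ^ k"
    using vanishes_to_orderE[OF assms(2)] by blast
  have "norm (F x + G x) \<le> (C1 + C2) * norm x ^ k" if "norm x < min r1 r2" for x
    using norm_triangle_ineq[of "F x" "G x"] 1(2)[of x] 2(2)[of x] that by (simp add: algebra_simps)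
  with 1(1) 2(1) show ?thesis
    unfolding vanishes_to_order_def by (intro exI[of _ "C1+C2"] exI[of _ "min r1 r2"]) auto
qed

lemma vanishes_to_order_uminus:
  "vanishes_to_order F k \<Longrightarrow> vanishes_to_order (\<lambda>x. - F x) k"
  unfolding vanishes_to_order_def by simp

lemma vanishes_to_order_diff:
  assumes "vanishes_to_order F k" "vanishes_to_order G k"
  shows "vanishes_to_order (\<lambda>x. F x - G x) k"
  using vanishes_to_order_add[OF assms(1) vanishes_to_order_uminus[OF assms(2)]] by simp

lemma vanishes_to_order_cong:
  assumes "vanishes_to_order G k" "eventually (\<lambda>x. F x = G x) (nhds 0)"
  shows "vanishes_to_order F k"
proof -
  obtain C r where r: "r > 0" "\<And>x. norm x < r \<Longrightarrow> norm (G x) \<le> C * norm x ^ k"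
    using vanishes_to_orderE[OF assms(1)] by blast
  obtain d where d: "d > 0" "\<And>x. norm x < d \<Longrightarrow> F x = G x"
    using assms(2) unfolding eventually_nhds_metric by (auto simp: dist_norm)
  show ?thesis
    unfolding vanishes_to_order_def using r d by (intro exI[of _ C] exI[of _ "min r d"]) auto
qed

lemma vanishes_to_order_mono:
  assumes "vanishes_to_order F m" "k \<le> m"
  shows "vanishes_to_order F k"
proof -
  obtain C r where C: "C \<ge> 0" "r > 0" "\<And>x. norm x < r \<Longrightarrow> norm (F x) \<le> C * norm x ^ m"
    using vanishes_to_orderE[OF assms(1)] by blast
  have "norm (F x) \<le> C * norm x ^ k" if "norm x < min r 1" for x
  proof -
    have "norm x ^ m \<le> norm x ^ k" using that assms(2) by (intro power_decreasing) auto
    then show ?thesis using C(3)[of x] that C(1) by (meson min_less_iff_conj mult_left_mono order_trans)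
  qed
  with C(2) show ?thesis
    unfolding vanishes_to_order_def by (intro exI[of _ C] exI[of _ "min r 1"]) auto
qed

lemma vanishes_to_order_ge_2_imp_le_norm:
  assumes "vanishes_to_order G k" "k \<ge> 2"
  obtains r where "r > 0" "\<And>x. norm x < r \<Longrightarrow> norm (G x) \<le> norm x"
proof -
  obtain C r where C: "C \<ge> 0" "r > 0" "\<And>x. norm x < r \<Longrightarrow> norm (G x) \<le> C * norm x ^ k"
    using vanishes_to_orderE[OF assms(1)] by blast
  define r' where "r' = min r (min 1 (1/(C+1)))"
  have "norm (G x) \<le> norm x" if x: "norm x < r'" for x
  proof -
    have xr: "norm x < r" and "norm x + C * norm x < 1"
      using x C(1) by (auto simp: r'_def field_simps)
    then have x1: "norm x \<le> 1" "C * norm x \<le> 1"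
      using mult_nonneg_nonneg[OF C(1) norm_ge_zero[of x]] norm_ge_zero[of x] by linarith+
    have "norm (G x) \<le> C * norm x ^ 2"
      using C(3)[OF xr] C(1) power_decreasing[OF assms(2), of "norm x"] x1(1)
      by (meson mult_left_mono norm_ge_zero order_trans)
    also have "\<dots> = (C * norm x) * norm x" by (simp add: power2_eq_square)
    also have "\<dots> \<le> norm x" using x1(2) mult_right_mono[of "C * norm x" 1 "norm x"] by simp
    finally show ?thesis .
  qed
  moreover have "r' > 0" using C by (simp add: r'_def)
  ultimately show ?thesis using that by blast
qed

lemma ray_flat_imp_vanishes_to_order:
  fixes F :: "complex^'n \<Rightarrow> complex^'n"
  assumes "holo_near0 F" "ray_flat F k"
  shows "vanishes_to_order F k"
proof -
  obtain R C :: real where RC: "R > 0" "C \<ge> 0"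
    "\<And>k x. ray_flat F k \<Longrightarrow> norm x \<le> R/2 \<Longrightarrow> norm (F x) \<le> C * (norm x/R)^k"
    using ray_flat_uniform_bound[OF assms(1)] by blast
  have "norm (F x) \<le> (C / R^k) * norm x ^ k" if "norm x < R/2" for x
    using RC(3)[OF assms(2), of x] that by (simp add: power_divide)
  with RC(1) show ?thesis
    unfolding vanishes_to_order_def by (intro exI[of _ "C / R^k"] exI[of _ "R/2"]) auto
qed

section \<open>Lipschitz estimates\<close>

definition lipschitz_order :: "('a::real_normed_vector \<Rightarrow> 'b::real_normed_vector) \<Rightarrow> nat \<Rightarrow> bool" where
  "lipschitz_order F k \<longleftrightarrow> (\<exists>C r. C \<ge> 0 \<and> r > 0 \<and> (\<forall>a b. norm a < r \<longrightarrow> norm b < r \<longrightarrow>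
      norm (F a - F b) \<le> C * (max (norm a) (norm b))^(k-1) * norm (a - b)))"

lemma Cauchy_derivative_bound:
  fixes \<psi> :: "complex \<Rightarrow> complex"
  assumes hol: "\<psi> holomorphic_on ball 0 (2*d)" and d: "d > 0"
    and bound: "\<And>s. norm s = d \<Longrightarrow> norm (\<psi> s) \<le> B"
  shows "norm (deriv \<psi> 0) \<le> B / d"
proof -
  have "norm ((deriv ^^ 1) \<psi> 0) \<le> fact 1 * B / d^1"
  proof (rule Cauchy_inequality)
    show "\<psi> holomorphic_on ball 0 d" using d by (intro holomorphic_on_subset[OF hol]) auto
    show "continuous_on (cball 0 d) \<psi>"
      using d by (intro continuous_on_subset[OF holomorphic_on_imp_continuous_on[OF hol]]) auto
    show "norm (0 - s) = d \<Longrightarrow> norm (\<psi> s) \<le> B" for s using bound[of s] by simp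
  qed (fact d)
  then show ?thesis by simp
qed

lemma derivative_bound_near_zero:
  fixes F :: "complex^'n \<Rightarrow> complex^'n" and C0 d r0 \<rho> :: real
  assumes hol: "holo_on F (ball 0 \<rho>)"
    and bdF: "\<And>y. norm y < r0 \<Longrightarrow> norm (F y) \<le> C0 * norm y ^ k" and C0: "C0 \<ge> 0"
    and d: "d > 0" "3*d \<le> \<rho>" "2*d < r0" and z: "norm z \<le> d"
    and L: "(F has_derivative L) (at z)" and lin: "\<And>(c::complex) w. L (c *s w) = c *s L w"
    and k: "k \<ge> 1"
  shows "norm (L v) \<le> CARD('n) * C0 * 2^k * d^(k-1) * norm v"
proof -
  obtain t u where u: "norm u \<le> 1" and t: "cmod t = norm v" and v_eq: "v = t *s u"
    using polar_vector by blast
  have comp: "norm (L u $ j) \<le> C0 * 2^k * d^(k-1)" for j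
  proof -
    define \<psi> where "\<psi> s = F (z + s *s u) $ j" for s
    have near: "norm (z + s *s u) \<le> d + cmod s" for s
      using norm_triangle_ineq[of z "s *s u"] z u mult_left_le[of "norm u" "cmod s"]
      by (simp add: norm_vector_smult)
    have hol2: "\<psi> holomorphic_on ball 0 (2*d)"
      unfolding \<psi>_def
    proof (rule holomorphic_on_along_line[OF hol])
      fix s :: complex assume "s \<in> ball 0 (2*d)"
      then show "z + s *s u \<in> ball 0 \<rho>" using near[of s] d by simp
    qed
    have "((\<lambda>s. F (z + s *s u) $ j) has_field_derivative (L u $ j)) (at 0)"
      by (rule has_field_derivative_along_line) (use L lin in auto)
    then have "deriv \<psi> 0 = L u $ j" unfolding \<psi>_def by (rule DERIV_imp_deriv)
    moreover have "norm (deriv \<psi> 0) \<le> C0 * (2*d)^k / d"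
    proof (rule Cauchy_derivative_bound[OF hol2 d(1)])
      fix s :: complex assume "norm s = d"
      then have ns: "norm (z + s *s u) \<le> 2*d" using near[of s] by simp
      have "norm (\<psi> s) \<le> norm (F (z + s *s u))"
        unfolding \<psi>_def by (rule Finite_Cartesian_Product.norm_nth_le)
      also have "\<dots> \<le> C0 * norm (z + s *s u) ^ k" using ns d by (intro bdF) simp
      also have "\<dots> \<le> C0 * (2*d)^k" using ns C0 by (intro mult_left_mono power_mono) auto
      finally show "norm (\<psi> s) \<le> C0 * (2*d)^k" .
    qed
    moreover have "C0 * (2*d)^k / d = C0 * 2^k * d^(k-1)"
      using d k by (cases k) (simp_all add: power_mult_distrib)
    ultimately show ?thesis by simp
  qed
  have "norm (L v) = norm v * norm (L u)" using t by (simp add: v_eq lin norm_vector_smult)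
  also have "\<dots> \<le> norm v * (CARD('n) * (C0 * 2^k * d^(k-1)))"
    by (intro mult_left_mono norm_le_card_mult_component_bound comp) simp
  finally show ?thesis by (simp add: algebra_simps)
qed

text \<open>Mean value inequality on the ball of radius max(|a|,|b|), with the derivative bounded by
  the Cauchy estimate above.\<close>
lemma vanishes_to_order_imp_lipschitz_order:
  fixes F :: "complex^'n \<Rightarrow> complex^'n"
  assumes "holo_near0 F" "vanishes_to_order F k" "k \<ge> 1"
  shows "lipschitz_order F k"
proof -
  obtain \<rho> where \<rho>: "\<rho> > 0" and hol: "holo_on F (ball 0 \<rho>)"
    using holo_near0_ball[OF assms(1)] by blast
  obtain C0 r0 where C0: "C0 \<ge> 0" "r0 > 0" "\<And>x. norm x < r0 \<Longrightarrow> norm (F x) \<le> C0 * norm x ^ k"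
    using vanishes_to_orderE[OF assms(2)] by blast
  define C where "C = CARD('n) * C0 * 2^k"
  define r where "r = min \<rho> r0 / 3"
  have "norm (F a - F b) \<le> C * (max (norm a) (norm b))^(k-1) * norm (a - b)"
    if a: "norm a < r" and b: "norm b < r" for a b
  proof (cases "max (norm a) (norm b) = 0")
    case True
    then show ?thesis by (simp add: max_def split: if_splits)
  next
    case False
    define d where "d = max (norm a) (norm b)"
    have d: "d > 0" "3*d \<le> \<rho>" "2*d < r0" using False a b \<rho> C0 by (auto simp: d_def r_def max_def)
    have "\<exists>L. (F has_derivative L) (at z) \<and> (\<forall>(c::complex) w. L (c *s w) = c *s L w)"
      if "z \<in> cball 0 d" for z
      using hol d that unfolding holo_on_def by simp
    then obtain L where L: "\<And>z. z \<in> cball 0 d \<Longrightarrow>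
        (F has_derivative L z) (at z) \<and> (\<forall>(c::complex) w. L z (c *s w) = c *s L z w)"
      by metis
    have "norm (F a - F b) \<le> C * d^(k-1) * norm (a - b)"
    proof (rule differentiable_bound[where S="cball 0 d" and f'=L])
      show "(F has_derivative L z) (at z within cball 0 d)" if "z \<in> cball 0 d" for z
        using L[OF that] by (blast intro: has_derivative_at_withinI)
      show "onorm (L z) \<le> C * d^(k-1)" if "z \<in> cball 0 d" for z
      proof (rule onorm_le)
        fix v
        show "norm (L z v) \<le> C * d^(k-1) * norm v"
          unfolding C_def using L[OF that] that
          by (intro derivative_bound_near_zero[OF hol C0(3) C0(1) d _ _ _ assms(3)]) auto
      qed
    qed (auto simp: d_def)
    then show ?thesis by (simp add: d_def)
  qed
  moreover have "C \<ge> 0" "r > 0" using C0 \<rho> by (simp_all add: C_def r_def)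
  ultimately show ?thesis unfolding lipschitz_order_def by blast
qed

lemma lipschitz_order_comp_near_id:
  assumes lip: "lipschitz_order F k" and P: "vanishes_to_order (deviation P) j" and j: "j \<ge> 2"
  shows "vanishes_to_order (\<lambda>x. F (P x) - F x) (k - 1 + j)"
proof -
  obtain C r where C: "C \<ge> 0" "r > 0" and F_lip: "\<And>a b. norm a < r \<Longrightarrow> norm b < r \<Longrightarrow>
      norm (F a - F b) \<le> C * (max (norm a) (norm b))^(k-1) * norm (a - b)"
    using lip unfolding lipschitz_order_def by blast
  obtain Cp rp where Cp: "Cp \<ge> 0" "rp > 0" "\<And>x. norm x < rp \<Longrightarrow> norm (P x - x) \<le> Cp * norm x ^ j"
    using vanishes_to_orderE[OF P] by blast
  obtain rs where rs: "rs > 0" "\<And>x. norm x < rs \<Longrightarrow> norm (P x - x) \<le> norm x"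
    using vanishes_to_order_ge_2_imp_le_norm[OF P j] by blast
  define r' where "r' = min (r/2) (min rp rs)"
  have "norm (F (P x) - F x) \<le> (C * 2^(k-1) * Cp) * norm x ^ (k - 1 + j)" if x: "norm x < r'" for x
  proof -
    have Px: "norm (P x) \<le> 2 * norm x"
      using rs(2)[of x] x norm_triangle_ineq[of "P x - x" x] by (simp add: r'_def)
    have "norm x * 2 < r" using x by (simp add: r'_def)
    then have "norm (P x) < r" "norm x < r" using Px norm_ge_zero[of x] by linarith+
    then have "norm (F (P x) - F x) \<le> C * (max (norm (P x)) (norm x))^(k-1) * norm (P x - x)"
      by (rule F_lip)
    also have "\<dots> \<le> C * (2 * norm x)^(k-1) * (Cp * norm x ^ j)"
      using C Cp(3)[of x] x Px
      by (intro mult_mono mult_left_mono power_mono) (auto simp: r'_def le_max_iff_disj)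
    also have "\<dots> = (C * 2^(k-1) * Cp) * norm x ^ (k - 1 + j)"
      by (simp add: power_mult_distrib power_add)
    finally show ?thesis .
  qed
  moreover have "r' > 0" using C Cp rs by (simp add: r'_def)
  ultimately show ?thesis unfolding vanishes_to_order_def by blast
qed

lemma deviation_conjugate_vanishes_to_order:
  fixes f f0 h :: "'a::real_normed_vector \<Rightarrow> 'a"
  assumes k: "k \<ge> 2"
    and lip_f: "lipschitz_order (deviation f) k" and ord_f0: "vanishes_to_order (deviation f0) k"
    and lip_h: "lipschitz_order (deviation h) 2" and ord_h: "vanishes_to_order (deviation h) 2"
    and conj: "eventually (\<lambda>x. f (h x) = h (f0 x)) (nhds 0)"
  shows "vanishes_to_order (\<lambda>x. deviation f0 x - deviation f x) (k+1)"
proof -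
  have orders: "k - 1 + 2 = k + 1" "2 - 1 + k = k + 1" using k by simp_all
  have "vanishes_to_order (\<lambda>x. deviation f (h x) - deviation f x) (k + 1)"
    using lipschitz_order_comp_near_id[OF lip_f ord_h order_refl] unfolding orders(1) .
  moreover have "vanishes_to_order (\<lambda>x. deviation h (f0 x) - deviation h x) (k + 1)"
    using lipschitz_order_comp_near_id[OF lip_h ord_f0 k] unfolding orders(2) .
  ultimately have "vanishes_to_order
      (\<lambda>x. (deviation f (h x) - deviation f x) - (deviation h (f0 x) - deviation h x)) (k+1)"
    by (rule vanishes_to_order_diff)
  then show ?thesis
    by (rule vanishes_to_order_cong) (use conj in \<open>eventually_elim, simp add: algebra_simps\<close>)
qed

text \<open>To first order beyond the identity, composition adds deviations.\<close>
lemma foldr_comp_deviation: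
  fixes fs :: "('a::real_normed_vector \<Rightarrow> 'a) list"
  assumes "\<forall>f\<in>set fs. lipschitz_order (deviation f) k \<and> vanishes_to_order (deviation f) k"
    and k: "k \<ge> 2"
  shows "vanishes_to_order (deviation (foldr (\<circ>) fs id)) k \<and>
    vanishes_to_order (\<lambda>x. deviation (foldr (\<circ>) fs id) x - (\<Sum>f\<leftarrow>fs. deviation f x)) (k+1)"
  using assms(1)
proof (induction fs)
  case Nil
  then show ?case by (simp add: vanishes_to_order_zero)
next
  case (Cons f fs)
  define P where "P = foldr (\<circ>) fs id"
  have "vanishes_to_order (deviation P) k \<and>
      vanishes_to_order (\<lambda>x. deviation P x - (\<Sum>f\<leftarrow>fs. deviation f x)) (k+1)"
    unfolding P_def by (rule Cons.IH) (use Cons.prems in simp)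
  then have IH: "vanishes_to_order (deviation P) k"
      "vanishes_to_order (\<lambda>x. deviation P x - (\<Sum>f\<leftarrow>fs. deviation f x)) (k+1)"
    by blast+
  have f: "lipschitz_order (deviation f) k" "vanishes_to_order (deviation f) k"
    using Cons.prems by auto
  have "vanishes_to_order (\<lambda>x. deviation f (P x) - deviation f x) (k - 1 + k)"
    by (rule lipschitz_order_comp_near_id[OF f(1) IH(1) k])
  then have step_k: "vanishes_to_order (\<lambda>x. deviation f (P x) - deviation f x) k"
    and step_k1: "vanishes_to_order (\<lambda>x. deviation f (P x) - deviation f x) (k+1)"
    using k by (auto elim!: vanishes_to_order_mono)
  have "vanishes_to_order (\<lambda>x. (deviation f (P x) - deviation f x) + deviation f x + deviation P x) k"
    by (rule vanishes_to_order_add[OF vanishes_to_order_add[OF step_k f(2)] IH(1)])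
  moreover have "vanishes_to_order (\<lambda>x. (deviation f (P x) - deviation f x) +
      (deviation P x - (\<Sum>f\<leftarrow>fs. deviation f x))) (k+1)"
    by (rule vanishes_to_order_add[OF step_k1 IH(2)])
  moreover have "deviation (foldr (\<circ>) (f # fs) id) =
      (\<lambda>x. (deviation f (P x) - deviation f x) + deviation f x + deviation P x)"
    "(\<lambda>x. deviation (foldr (\<circ>) (f # fs) id) x - (\<Sum>g\<leftarrow>f # fs. deviation g x)) =
      (\<lambda>x. (deviation f (P x) - deviation f x) + (deviation P x - (\<Sum>f\<leftarrow>fs. deviation f x)))"
    by (simp_all add: P_def fun_eq_iff algebra_simps)
  ultimately show ?case by (simp only:)
qed

lemma germ_eq_has_derivative:
  assumes "germ_eq0 f g" "(g has_derivative L) (at 0)"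
  shows "(f has_derivative L) (at 0)"
proof -
  obtain S where S: "open S" "0 \<in> S" "\<And>x. x \<in> S \<Longrightarrow> f x = g x"
    using assms(1) unfolding germ_eq_def eventually_nhds by blast
  show ?thesis by (rule has_derivative_transform_within_open[OF assms(2) S(1,2)]) (simp add: S(3))
qed

lemma has_derivative_comp_fixing_0:
  assumes "(g has_derivative Lg) (at 0)" "(f has_derivative Lf) (at 0)" "g 0 = 0"
  shows "((f \<circ> g) has_derivative (Lf \<circ> Lg)) (at 0)"
  using has_derivative_compose[OF assms(1), of f Lf] assms(2,3) by (simp add: o_def)

lemma diff0_derivative_surj:
  assumes "diff0 h" "(h has_derivative L) (at 0)"
  shows "surj L"
proof -
  obtain g where g: "g 0 = 0" "holo_near0 g" "germ_eq0 (h \<circ> g) id"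
    using assms(1) unfolding diff0_def by blast
  obtain Lg where Lg: "(g has_derivative Lg) (at 0)" using holo_near0_has_derivative[OF g(2)] .
  have "((h \<circ> g) has_derivative (L \<circ> Lg)) (at 0)"
    by (rule has_derivative_comp_fixing_0[OF Lg assms(2) g(1)])
  moreover have "((h \<circ> g) has_derivative id) (at 0)"
    using germ_eq_has_derivative[OF g(3)] has_derivative_ident by (simp add: id_def)
  ultimately have "L \<circ> Lg = id" by (rule has_derivative_unique)
  then show ?thesis by (intro surjI[of L Lg]) (simp add: fun_eq_iff)
qed

text \<open>Differentiating f \<circ> h = h \<circ> f0 at 0 gives Df \<circ> Dh = Dh, and Dh is onto.\<close>
lemma conjugate_tangent_to_id:
  assumes h: "diff0 h" and f: "holo_near0 f"
    and f0: "(f0 has_derivative id) (at 0)" "f0 0 = 0"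
    and conj: "germ_eq0 (f \<circ> h) (h \<circ> f0)"
  shows "(f has_derivative id) (at 0)"
proof -
  obtain Lf where Lf: "(f has_derivative Lf) (at 0)" using holo_near0_has_derivative[OF f] .
  obtain Lh where Lh: "(h has_derivative Lh) (at 0)"
    using holo_near0_has_derivative h unfolding diff0_def by blast
  have h0: "h 0 = 0" using h unfolding diff0_def by blast
  have "((f \<circ> h) has_derivative (Lf \<circ> Lh)) (at 0)"
    by (rule has_derivative_comp_fixing_0[OF Lh Lf h0])
  moreover have "((f \<circ> h) has_derivative (Lh \<circ> id)) (at 0)"
    by (rule germ_eq_has_derivative[OF conj has_derivative_comp_fixing_0[OF f0(1) Lh f0(2)]])
  ultimately have "Lf \<circ> Lh = Lh \<circ> id" by (rule has_derivative_unique)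
  have "Lf y = y" for y
  proof -
    obtain x where "y = Lh x" using diff0_derivative_surj[OF h Lh] by (metis surjD)
    then show ?thesis using fun_cong[OF \<open>Lf \<circ> Lh = Lh \<circ> id\<close>, of x] by simp
  qed
  then have "Lf = id" by (simp add: fun_eq_iff)
  with Lf show ?thesis by simp
qed

lemma words_tangent_to_id:
  assumes "w \<in> words S" and S: "\<And>s. s \<in> S \<Longrightarrow> s 0 = 0 \<and> (s has_derivative id) (at 0)"
  shows "w 0 = 0 \<and> (w has_derivative id) (at 0)"
  using assms(1)
proof induction
  case words_id
  then show ?case by (simp add: has_derivative_ident[unfolded id_def[symmetric]])
next
  case (words_gen s w)
  with S have "((s \<circ> w) has_derivative (id \<circ> id)) (at 0)"
    by (blast intro: has_derivative_comp_fixing_0)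
  with words_gen S show ?case by (simp add: o_def id_def)
next
  case (words_inv s g w)
  obtain Lg where Lg: "(g has_derivative Lg) (at 0)"
    using holo_near0_has_derivative words_inv(2) unfolding diff0_def by blast
  have "((g \<circ> s) has_derivative (Lg \<circ> id)) (at 0)"
    using S words_inv(1) by (blast intro: has_derivative_comp_fixing_0 Lg)
  moreover have "((g \<circ> s) has_derivative id) (at 0)"
    using germ_eq_has_derivative[OF words_inv(3)] has_derivative_ident by (simp add: id_def)
  ultimately have "Lg \<circ> id = id" by (rule has_derivative_unique)
  then have "Lg = id" by simp
  with words_inv Lg have "((g \<circ> w) has_derivative (id \<circ> id)) (at 0)"
    by (blast intro: has_derivative_comp_fixing_0)
  with words_inv show ?case by (simp add: diff0_def o_def id_def)
qed

lemma words_germ_eq_id: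
  assumes "w \<in> words S" and S: "\<And>s. s \<in> S \<Longrightarrow> germ_eq0 s id"
  shows "germ_eq0 w id"
  using assms(1)
proof induction
  case words_id
  then show ?case by (simp add: germ_eq_def)
next
  case (words_gen s w)
  have "\<forall>\<^sub>F x in nhds 0. w x = x" "\<forall>\<^sub>F x in nhds 0. s x = x"
    using words_gen S by (auto simp: germ_eq_def)
  then have "\<forall>\<^sub>F x in nhds 0. s (w x) = x" by eventually_elim simp
  then show ?case by (simp add: germ_eq_def)
next
  case (words_inv s g w)
  have "\<forall>\<^sub>F x in nhds 0. w x = x" "\<forall>\<^sub>F x in nhds 0. s x = x" "\<forall>\<^sub>F x in nhds 0. g (s x) = x"
    using words_inv S by (auto simp: germ_eq_def)
  then have "\<forall>\<^sub>F x in nhds 0. g (w x) = x" by eventually_elim simp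
  then show ?case by (simp add: germ_eq_def)
qed

section \<open>Leading terms along a ray\<close>

definition has_ray_leading_term :: "complex^'n \<Rightarrow> nat \<Rightarrow> (complex^'n \<Rightarrow> complex^'n) \<Rightarrow> complex^'n \<Rightarrow> bool" where
  "has_ray_leading_term x0 k D A \<longleftrightarrow> (\<exists>c \<delta>. \<delta> > 0 \<and> (\<forall>t::complex. norm t < \<delta> \<longrightarrow>
      norm (D (t *s x0) - t^k *s A) \<le> c * norm t ^ (k+1)))"

lemma has_ray_leading_term_zero: "has_ray_leading_term x0 k (\<lambda>x. 0) 0"
  unfolding has_ray_leading_term_def by (intro exI[of _ 0] exI[of _ 1]) auto

lemma has_ray_leading_term_add:
  assumes "has_ray_leading_term x0 k D A" "has_ray_leading_term x0 k E B"
  shows "has_ray_leading_term x0 k (\<lambda>x. D x + E x) (A + B)"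
proof -
  obtain c1 d1 where 1: "d1 > 0"
      "\<And>t. norm t < d1 \<Longrightarrow> norm (D (t *s x0) - t^k *s A) \<le> c1 * norm t ^ (k+1)"
    using assms(1) unfolding has_ray_leading_term_def by blast
  obtain c2 d2 where 2: "d2 > 0"
      "\<And>t. norm t < d2 \<Longrightarrow> norm (E (t *s x0) - t^k *s B) \<le> c2 * norm t ^ (k+1)"
    using assms(2) unfolding has_ray_leading_term_def by blast
  have "norm (D (t *s x0) + E (t *s x0) - t^k *s (A + B)) \<le> (c1 + c2) * norm t ^ (k+1)"
    if "norm t < min d1 d2" for t
  proof -
    have "D (t *s x0) + E (t *s x0) - t^k *s (A + B) =
        (D (t *s x0) - t^k *s A) + (E (t *s x0) - t^k *s B)"
      by (simp add: vector_add_ldistrib algebra_simps)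
    then show ?thesis
      using norm_triangle_ineq[of "D (t *s x0) - t^k *s A" "E (t *s x0) - t^k *s B"]
        1(2)[of t] 2(2)[of t] that by (simp add: algebra_simps)
  qed
  with 1(1) 2(1) show ?thesis
    unfolding has_ray_leading_term_def by (intro exI[of _ "c1+c2"] exI[of _ "min d1 d2"]) auto
qed

lemma has_ray_leading_term_uminus:
  assumes "has_ray_leading_term x0 k D A"
  shows "has_ray_leading_term x0 k (\<lambda>x. - D x) (- A)"
proof -
  have "- D y - t^k *s (- A) = - (D y - t^k *s A)" for y t by (simp add: vector_smult_rneg)
  then show ?thesis using assms unfolding has_ray_leading_term_def by (metis norm_minus_cancel)
qed

lemma has_ray_leading_term_diff:
  assumes "has_ray_leading_term x0 k D A" "has_ray_leading_term x0 k E B"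
  shows "has_ray_leading_term x0 k (\<lambda>x. D x - E x) (A - B)"
  using has_ray_leading_term_add[OF assms(1) has_ray_leading_term_uminus[OF assms(2)]] by simp

lemma has_ray_leading_term_sum_list:
  assumes "\<And>f. f \<in> set fs \<Longrightarrow> has_ray_leading_term x0 k (D f) (A f)"
  shows "has_ray_leading_term x0 k (\<lambda>x. \<Sum>f\<leftarrow>fs. D f x) (\<Sum>f\<leftarrow>fs. A f)"
  using assms
proof (induction fs)
  case Nil
  then show ?case using has_ray_leading_term_zero by simp
next
  case (Cons f fs)
  then show ?case using has_ray_leading_term_add[of x0 k "D f" "A f"] by simp
qed

lemma has_ray_leading_term_unique:
  assumes "has_ray_leading_term x0 k D A" "has_ray_leading_term x0 k D B"
  shows "A = B"
proof -
  obtain c \<delta> where "\<delta> > 0"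
      and bound: "\<And>t. norm t < \<delta> \<Longrightarrow> norm (D (t *s x0) - D (t *s x0) - t^k *s (A - B)) \<le> c * norm t ^ (k+1)"
    using has_ray_leading_term_diff[OF assms] unfolding has_ray_leading_term_def by blast
  have ev: "eventually (\<lambda>t. norm (A - B) \<le> c * t) (at_right 0)"
  proof (rule eventually_at_rightI[OF _ \<open>\<delta> > 0\<close>])
    fix t :: real assume t: "t \<in> {0<..<\<delta>}"
    then have "norm (complex_of_real t) < \<delta>" by simp
    from bound[OF this] have "norm (complex_of_real t ^ k *s (A - B)) \<le> c * norm (complex_of_real t) ^ (k+1)"
      by (simp only: diff_self diff_0 norm_minus_cancel)
    moreover have "norm (complex_of_real t ^ k *s (A - B)) = t^k * norm (A - B)"
      using t by (simp only: norm_vector_smult norm_power norm_of_real) simp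
    ultimately have "t^k * norm (A - B) \<le> t^k * (c * t)"
      using t by (simp add: mult_ac)
    then show "norm (A - B) \<le> c * t" using t by simp
  qed
  have "((\<lambda>t. c * t) \<longlongrightarrow> c * 0) (at_right (0::real))"
    by (intro tendsto_intros)
  from tendsto_lowerbound[OF this ev trivial_limit_at_right_real]
  have "norm (A - B) \<le> c * 0" .
  then show ?thesis by simp
qed

lemma vanishes_to_order_imp_has_ray_leading_term_0:
  assumes "vanishes_to_order D (k+1)" "norm x0 \<le> 1"
  shows "has_ray_leading_term x0 k D 0"
proof -
  obtain C r where C: "C \<ge> 0" "r > 0" "\<And>x. norm x < r \<Longrightarrow> norm (D x) \<le> C * norm x ^ (k+1)"
    using vanishes_to_orderE[OF assms(1)] by blast
  have "norm (D (t *s x0)) \<le> C * norm t ^ (k+1)" if "norm t < r" for t :: complex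
  proof -
    have short: "norm (t *s x0) \<le> norm t"
      using assms(2) mult_left_le[of "norm x0" "cmod t"] by (simp add: norm_vector_smult)
    then have "norm (D (t *s x0)) \<le> C * norm (t *s x0) ^ (k+1)" using that by (intro C(3)) simp
    also have "\<dots> \<le> C * norm t ^ (k+1)" using short C(1) by (intro mult_left_mono power_mono) auto
    finally show ?thesis .
  qed
  with C(2) show ?thesis
    unfolding has_ray_leading_term_def by (intro exI[of _ C] exI[of _ r]) auto
qed

lemma ray_flat_imp_has_ray_leading_term:
  fixes F :: "complex^'n \<Rightarrow> complex^'n"
  assumes "holo_near0 F" "ray_flat F k" "norm x0 \<le> 1"
  shows "has_ray_leading_term x0 k F (ray_leading_term F k x0)"
proof -
  obtain R M :: real where RM: "R > 0" "M \<ge> 0"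
    "\<And>x0 j t k. norm x0 \<le> 1 \<Longrightarrow> norm t \<le> R/2 \<Longrightarrow>
       norm (F (t *s x0) $ j - (\<Sum>i<k. ray_coeff F x0 j i / fact i * t^i)) \<le> 2*M*(norm t/R)^k"
    using ray_taylor_remainder[OF assms(1)] by blast
  define C where "C = CARD('n) * (2*M) / R^(k+1)"
  have "norm (F (t *s x0) - t^k *s ray_leading_term F k x0) \<le> C * norm t ^ (k+1)"
    if t: "norm t < R/2" for t
  proof -
    have "(\<Sum>i<Suc k. ray_coeff F x0 j i / fact i * t^i) = ray_coeff F x0 j k / fact k * t^k" for j
      using assms(2,3) by (simp add: ray_flat_def)
    then have "norm ((F (t *s x0) - t^k *s ray_leading_term F k x0) $ j) \<le> 2*M*(norm t/R)^(k+1)" for j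
      using RM(3)[OF assms(3), of t j "Suc k"] t by (simp add: ray_leading_term_def mult.commute)
    then have "norm (F (t *s x0) - t^k *s ray_leading_term F k x0) \<le> CARD('n) * (2*M*(norm t/R)^(k+1))"
      by (rule norm_le_card_mult_component_bound)
    also have "\<dots> = C * norm t ^ (k+1)" by (simp add: C_def power_divide)
    finally show ?thesis .
  qed
  with RM(1) show ?thesis
    unfolding has_ray_leading_term_def by (intro exI[of _ C] exI[of _ "R/2"]) auto
qed

lemma ray_flat_deviation_estimates:
  fixes f :: "complex^'n \<Rightarrow> complex^'n"
  assumes "holo_near0 f" "ray_flat (deviation f) k" "k \<ge> 1"
  shows "vanishes_to_order (deviation f) k" "lipschitz_order (deviation f) k"
proof -
  have hol: "holo_near0 (deviation f)" by (rule holo_near0_deviation[OF assms(1)])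
  show ord: "vanishes_to_order (deviation f) k"
    by (rule ray_flat_imp_vanishes_to_order[OF hol assms(2)])
  show "lipschitz_order (deviation f) k"
    by (rule vanishes_to_order_imp_lipschitz_order[OF hol ord assms(3)])
qed

lemma conjugate_same_ray_leading_term:
  fixes f f0 h :: "complex^'n \<Rightarrow> complex^'n"
  assumes f: "holo_near0 f" "ray_flat (deviation f) k"
    and f0: "holo_near0 f0" "ray_flat (deviation f0) k"
    and h: "holo_near0 h" "h 0 = 0" "(h has_derivative id) (at 0)"
    and k: "k \<ge> 2" and conj: "germ_eq0 (f \<circ> h) (h \<circ> f0)" and x0: "norm x0 \<le> 1"
  shows "ray_leading_term (deviation f) k x0 = ray_leading_term (deviation f0) k x0"
proof -
  have h_flat: "ray_flat (deviation h) 2" by (rule tangent_to_id_imp_ray_flat_deviation_2[OF h(2,3)])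
  have "lipschitz_order (deviation f) k" "vanishes_to_order (deviation f0) k"
      "lipschitz_order (deviation h) 2" "vanishes_to_order (deviation h) 2"
    using ray_flat_deviation_estimates[OF f] ray_flat_deviation_estimates[OF f0]
      ray_flat_deviation_estimates[OF h(1) h_flat] k by simp_all
  then have "vanishes_to_order (\<lambda>x. deviation f0 x - deviation f x) (k+1)"
    using conj unfolding germ_eq_def by (intro deviation_conjugate_vanishes_to_order k) simp_all
  then have "has_ray_leading_term x0 k (\<lambda>x. deviation f0 x - deviation f x) 0"
    by (rule vanishes_to_order_imp_has_ray_leading_term_0[OF _ x0])
  moreover have "has_ray_leading_term x0 k (\<lambda>x. deviation f0 x - deviation f x)
      (ray_leading_term (deviation f0) k x0 - ray_leading_term (deviation f) k x0)"
    using f f0 x0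
    by (intro has_ray_leading_term_diff ray_flat_imp_has_ray_leading_term holo_near0_deviation)
  ultimately have "0 = ray_leading_term (deviation f0) k x0 - ray_leading_term (deviation f) k x0"
    by (rule has_ray_leading_term_unique)
  then show ?thesis by simp
qed

lemma ray_leading_terms_sum_zero:
  fixes fs :: "(complex^'n \<Rightarrow> complex^'n) list"
  assumes fs: "\<forall>f\<in>set fs. holo_near0 f \<and> ray_flat (deviation f) k" and k: "k \<ge> 2"
    and x0: "norm x0 \<le> 1" and prod: "germ_eq0 (foldr (\<circ>) fs id) id"
  shows "(\<Sum>f\<leftarrow>fs. ray_leading_term (deviation f) k x0) = 0"
proof -
  have "\<forall>f\<in>set fs. lipschitz_order (deviation f) k \<and> vanishes_to_order (deviation f) k"
    using fs k by (auto intro: ray_flat_deviation_estimates)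
  from foldr_comp_deviation[OF this k]
  have "vanishes_to_order (\<lambda>x. deviation (foldr (\<circ>) fs id) x - (\<Sum>f\<leftarrow>fs. deviation f x)) (k+1)"
    by blast
  moreover have "eventually (\<lambda>x. (\<Sum>f\<leftarrow>fs. deviation f x) =
      - (deviation (foldr (\<circ>) fs id) x - (\<Sum>f\<leftarrow>fs. deviation f x))) (nhds 0)"
    using prod unfolding germ_eq_def by eventually_elim simp
  ultimately have "vanishes_to_order (\<lambda>x. \<Sum>f\<leftarrow>fs. deviation f x) (k+1)"
    by (rule vanishes_to_order_cong[OF vanishes_to_order_uminus])
  then have "has_ray_leading_term x0 k (\<lambda>x. \<Sum>f\<leftarrow>fs. deviation f x) 0"
    by (rule vanishes_to_order_imp_has_ray_leading_term_0[OF _ x0])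
  moreover have "has_ray_leading_term x0 k (\<lambda>x. \<Sum>f\<leftarrow>fs. deviation f x)
      (\<Sum>f\<leftarrow>fs. ray_leading_term (deviation f) k x0)"
    using fs x0
    by (intro has_ray_leading_term_sum_list ray_flat_imp_has_ray_leading_term holo_near0_deviation) simp_all
  ultimately have "0 = (\<Sum>f\<leftarrow>fs. ray_leading_term (deviation f) k x0)"
    by (rule has_ray_leading_term_unique)
  then show ?thesis by simp
qed

text \<open>Such a k exists because a holomorphic germ flat to all orders along every ray is the
  identity.\<close>
lemma first_nonflat_order:
  fixes fs :: "(complex^'n \<Rightarrow> complex^'n) list"
  assumes fs: "\<forall>f\<in>set fs. holo_near0 f \<and> ray_flat (deviation f) 2"
    and nontrivial: "\<exists>f\<in>set fs. \<not> germ_eq0 f id"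
  obtains k f x0 where "k \<ge> 2" "\<forall>f\<in>set fs. ray_flat (deviation f) k" "f \<in> set fs"
    "norm x0 \<le> 1" "ray_leading_term (deviation f) k x0 \<noteq> 0"
proof -
  define flat where "flat n \<longleftrightarrow> (\<forall>f\<in>set fs. ray_flat (deviation f) (n + 2))" for n
  have "\<exists>n. \<not> flat n"
  proof (rule ccontr)
    assume "\<not> ?thesis"
    then have flat_all: "ray_flat (deviation f) m" if "f \<in> set fs" for f m
      using that ray_flat_mono[of _ "m + 2" m] by (auto simp: flat_def)
    have "germ_eq0 f id" if "f \<in> set fs" for f
    proof -
      have "eventually (\<lambda>x. deviation f x = 0) (nhds 0)"
        using fs flat_all that by (intro ray_flat_all_orders_imp_zero holo_near0_deviation) auto
      then show ?thesis by (simp add: germ_eq_def)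
    qed
    with nontrivial show False by blast
  qed
  moreover have "flat 0" using fs by (simp add: flat_def numeral_2_eq_2)
  ultimately obtain n where "flat n" "\<not> flat (Suc n)"
    using exists_least_lemma[of "\<lambda>n. \<not> flat n"] by blast
  then obtain f where f: "f \<in> set fs" and "\<not> ray_flat (deviation f) (Suc (n + 2))"
    unfolding flat_def by auto
  then obtain x0 j m where x0: "norm x0 \<le> 1" and m: "m < Suc (n + 2)"
    and coeff: "ray_coeff (deviation f) x0 j m \<noteq> 0"
    unfolding ray_flat_def by blast
  moreover have "\<not> m < n + 2" using \<open>flat n\<close> f x0 coeff unfolding flat_def ray_flat_def by blast
  ultimately have "m = n + 2" by simp
  with coeff have "ray_leading_term (deviation f) (n + 2) x0 $ j \<noteq> 0"
    by (simp add: ray_leading_term_def del: fact_Suc)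
  then have "ray_leading_term (deviation f) (n + 2) x0 \<noteq> 0" by auto
  with \<open>flat n\<close> f x0 show ?thesis using that[of "n + 2"] by (simp add: flat_def)
qed

section \<open>Irreducible groups\<close>

lemma generated_by_trivial:
  assumes "generated_by G fs" "\<forall>f\<in>set fs. germ_eq0 f id"
  shows "\<forall>g\<in>G. germ_eq0 g id"
proof
  fix g assume "g \<in> G"
  then obtain w where w: "w \<in> words (set fs)" and gw: "germ_eq0 g w"
    using assms(1) unfolding generated_by_def by blast
  have "germ_eq0 w id" using words_germ_eq_id[OF w] assms(2) by blast
  with gw show "germ_eq0 g id"
    unfolding germ_eq_def by (rule eventually_elim2) simp
qed

lemma basic_generators_tangent_to_id:
  assumes basic: "basic_generators G fs" and "\<exists>i<length fs. ((fs ! i) has_derivative id) (at 0)"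
  shows "\<forall>g\<in>G. (g has_derivative id) (at 0)"
proof -
  obtain i0 where i0: "i0 < length fs" "((fs ! i0) has_derivative id) (at 0)"
    using assms(2) by blast
  have diff: "\<forall>g\<in>G. diff0 g" and gens: "set fs \<subseteq> G"
    and words: "\<forall>g\<in>G. \<exists>w\<in>words (set fs). germ_eq0 g w"
    and conj: "\<forall>i<length fs. \<forall>j<length fs. \<exists>h\<in>G. germ_eq0 (fs ! i \<circ> h) (h \<circ> fs ! j)"
    using basic unfolding basic_generators_def generated_by_def by simp_all
  have tangent: "s 0 = 0 \<and> (s has_derivative id) (at 0)" if s: "s \<in> set fs" for s
  proof -
    obtain i where "i < length fs" "fs ! i = s" using s by (auto simp: in_set_conv_nth)
    with conj i0(1) obtain h where h: "h \<in> G" and hconj: "germ_eq0 (s \<circ> h) (h \<circ> fs ! i0)"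
      by blast
    have "diff0 s" "diff0 (fs ! i0)" using gens diff s nth_mem[OF i0(1)] by auto
    then have "holo_near0 s" "s 0 = 0" "(fs ! i0) 0 = 0" unfolding diff0_def by blast+
    moreover have "diff0 h" using diff h by blast
    ultimately show ?thesis using conjugate_tangent_to_id i0(2) hconj by blast
  qed
  show ?thesis
  proof
    fix g assume "g \<in> G"
    then obtain w where w: "w \<in> words (set fs)" and gw: "germ_eq0 g w"
      using words by blast
    have "(w has_derivative id) (at 0)" using words_tangent_to_id[OF w tangent] by blast
    with gw show "(g has_derivative id) (at 0)" by (rule germ_eq_has_derivative)
  qed
qed

lemma basic_generators_same_ray_leading_term:
  assumes basic: "basic_generators G fs"
    and G: "\<forall>g\<in>G. holo_near0 g \<and> g 0 = 0 \<and> (g has_derivative id) (at 0)"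
    and k: "k \<ge> 2" "\<forall>f\<in>set fs. ray_flat (deviation f) k" and x0: "norm x0 \<le> 1"
    and f: "f \<in> set fs" and f': "f' \<in> set fs"
  shows "ray_leading_term (deviation f) k x0 = ray_leading_term (deviation f') k x0"
proof -
  have conj: "\<forall>i<length fs. \<forall>j<length fs. \<exists>h\<in>G. germ_eq0 (fs ! i \<circ> h) (h \<circ> fs ! j)"
    and gens: "set fs \<subseteq> G"
    using basic unfolding basic_generators_def generated_by_def by simp_all
  obtain i j where "i < length fs" "fs ! i = f" "j < length fs" "fs ! j = f'"
    using f f' by (auto simp: in_set_conv_nth)
  with conj obtain h where "h \<in> G" "germ_eq0 (f \<circ> h) (h \<circ> f')" by blast
  with G gens k f f' x0 show ?thesis by (intro conjugate_same_ray_leading_term) auto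
qed

theorem proposition2p1:
  fixes G :: "(complex^'n \<Rightarrow> complex^'n) set"
    and fs :: "(complex^'n \<Rightarrow> complex^'n) list"
  assumes "basic_generators G fs"
    and "\<exists>i<length fs. ((fs ! i) has_derivative id) (at 0)"
  shows "\<forall>g\<in>G. germ_eq0 g id"
proof (rule ccontr)
  assume nontrivial: "\<not> ?thesis"
  have gen: "generated_by G fs" and prod: "germ_eq0 (foldr (\<circ>) fs id) id" and "fs \<noteq> []"
    using assms(1) unfolding basic_generators_def by simp_all
  have G: "\<forall>g\<in>G. holo_near0 g \<and> g 0 = 0 \<and> (g has_derivative id) (at 0)" and "set fs \<subseteq> G"
    using gen basic_generators_tangent_to_id[OF assms] unfolding generated_by_def diff0_def by auto
  then have "\<forall>f\<in>set fs. holo_near0 f \<and> ray_flat (deviation f) 2"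
    using tangent_to_id_imp_ray_flat_deviation_2 by blast
  moreover have "\<exists>f\<in>set fs. \<not> germ_eq0 f id" using generated_by_trivial[OF gen] nontrivial by blast
  ultimately obtain k f1 x0 where k: "k \<ge> 2" "\<forall>f\<in>set fs. ray_flat (deviation f) k"
    and f1: "f1 \<in> set fs" and x0: "norm x0 \<le> 1" and "ray_leading_term (deviation f1) k x0 \<noteq> 0"
    by (rule first_nonflat_order)
  have "(\<Sum>f\<leftarrow>fs. ray_leading_term (deviation f) k x0) = 0"
    using G \<open>set fs \<subseteq> G\<close> k x0 prod by (intro ray_leading_terms_sum_zero) auto
  moreover have "(\<Sum>f\<leftarrow>fs. ray_leading_term (deviation f) k x0) =
      (\<Sum>f\<leftarrow>fs. ray_leading_term (deviation f1) k x0)"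
    by (intro arg_cong[where f=sum_list] map_cong refl
        basic_generators_same_ray_leading_term[OF assms(1) G k x0 _ f1])
  ultimately show False
    using \<open>fs \<noteq> []\<close> \<open>ray_leading_term (deviation f1) k x0 \<noteq> 0\<close> by (simp add: sum_list_const_scaleR)
qed

end
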